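(* Let $\tilde\Theta\in\mathbb{R}^{p\times p}$ be a symmetric matrix with a positive diagonal, let $D=\mathrm{diag}\{d_j\}$ be a nonnegative diagonal matrix with $2D-D\tilde\Theta D\succeq 0$, and let $P_{\tilde X\mid X}$ be defined by \[\tilde X\mid X\sim\mathcal N_p\big((\mathbf I_p-D\tilde\Theta)X,\;2D-D\tilde\Theta D\big).\] Then for each $j=1,\dots,p$, $P_{\tilde X\mid X}$ is pairwise exchangeable with respect to the conditional distribution \[Q_j(\cdot\mid x_{-j})=\mathcal N\left(x_{-j}^\top\Big(\frac{-\tilde\Theta_{-j,j}}{\tilde\Theta_{jj}}\Big),\;\frac{1}{\tilde\Theta_{jj}}\right).\]
   Context: For $x\in\mathbb{R}^p$, $x_{-j}\in\mathbb{R}^{p-1}$ is $x$ with coordinate $j$ removed; $\tilde\Theta_{-j,j}\in\mathbb{R}^{p-1}$ is the $j$th column of $\tilde\Theta$ with entry $\tilde\Theta_{jj}$ removed. A conditional distribution $P_{\tilde X\mid X}(\cdot\mid x)$ on $\mathbb{R}^p$ is pairwise exchangeable with respect to $Q_j$ if for every distribution $D^{(j)}$ on $\mathbb{R}^p$ whose conditional distribution of $X_j$ given $X_{-j}$ is $Q_j$ (i.e. an arbitrary marginal for $X_{-j}$ times $Q_j$), drawing $X\sim D^{(j)}$ and $\tilde X\mid X\sim P_{\tilde X\mid X}(\cdot\mid X)$ gives $(X_j,\tilde X_j,X_{-j},\tilde X_{-j})\overset{d}{=}(\tilde X_j,X_j,X_{-j},\tilde X_{-j})$. Note $\tilde\Theta$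 need not be positive semidefinite, so the $Q_j$ need not be compatible with any joint distribution. *)

theory Defs
  imports "HOL-Probability.Probability"
begin

text \<open>Vectors in R^p are modelled as real^'n for a finite index type 'n (p = CARD('n)).\<close>

definition diagm :: "real^'n \<Rightarrow> real^'n^'n" where
  "diagm d = (\<chi> i k. if i = k then d $ i else 0)"

definition psd :: "real^'n^'n \<Rightarrow> bool" where
  "psd A \<longleftrightarrow> transpose A = A \<and> (\<forall>v. 0 \<le> v \<bullet> (A *v v))"

definition normal1 :: "real \<Rightarrow> real \<Rightarrow> real measure" where
  "normal1 m v = density lborel (normal_density m (sqrt v))"

definition std_gauss_vec :: "(real^'n) measure" where
  "std_gauss_vec = distr (PiM UNIV (\<lambda>i::'n. density lborel std_normal_density)) borel
      (\<lambda>z. vec_lambda z)"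

text \<open>Multivariate normal N_p(mu, S) (possibly degenerate): law of mu + A Z,
  Z standard Gaussian, A A^T = S.\<close>
definition gauss_vec :: "real^'n \<Rightarrow> real^'n^'n \<Rightarrow> (real^'n) measure" where
  "gauss_vec mu S =
     distr std_gauss_vec borel
       (\<lambda>z. mu + (SOME A :: real^'n^'n. A ** transpose A = S) *v z)"

definition vupd :: "real^'n \<Rightarrow> 'n \<Rightarrow> real \<Rightarrow> real^'n" where
  "vupd x j t = (\<chi> i. if i = j then t else x $ i)"

text \<open>Distribution D^(j): X_{-j} has the X_{-j}-marginal of mu (arbitrary), and
  X_j | X_{-j} ~ Q x (Q is required to depend only on x_{-j}).\<close>
definition complete_by :: "(real^'n) measure \<Rightarrow> (real^'n \<Rightarrow> real measure) \<Rightarrow> 'n \<Rightarrow> (real^'n) measure" where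
  "complete_by mu Q j = mu \<bind> (\<lambda>x. distr (Q x) borel (\<lambda>t. vupd x j t))"

definition swap_j :: "'n \<Rightarrow> (real^'n) \<times> (real^'n) \<Rightarrow> (real^'n) \<times> (real^'n)" where
  "swap_j j = (\<lambda>(x, y). (vupd x j (y $ j), vupd y j (x $ j)))"

definition pairwise_exchangeable ::
  "(real^'n \<Rightarrow> (real^'n) measure) \<Rightarrow> (real^'n \<Rightarrow> real measure) \<Rightarrow> 'n \<Rightarrow> bool" where
  "pairwise_exchangeable P Q j \<longleftrightarrow>
     (\<forall>mu. prob_space mu \<and> sets mu = sets (borel :: (real^'n) measure) \<longrightarrow>
        (let J = complete_by mu Q j \<bind> (\<lambda>x. distr (P x) borel (\<lambda>y. (x, y)))
         in distr J borel (swap_j j) = J))"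

definition Q_cond :: "real^'n^'n \<Rightarrow> 'n \<Rightarrow> real^'n \<Rightarrow> real measure" where
  "Q_cond Th j x = normal1 (\<Sum>k\<in>UNIV - {j}. x $ k * (- Th $ k $ j / Th $ j $ j)) (1 / Th $ j $ j)"

definition knock_kernel :: "real^'n^'n \<Rightarrow> real^'n \<Rightarrow> real^'n \<Rightarrow> (real^'n) measure" where
  "knock_kernel Th d x =
     gauss_vec ((mat 1 - diagm d ** Th) *v x) (2 *\<^sub>R diagm d - diagm d ** Th ** diagm d)"

end

theory Submission
  imports Defs
begin

text \<open>Given \<open>X\<^sub>-\<^sub>j = x\<^sub>-\<^sub>j\<close>, the pair \<open>(X, X\<^sup>~)\<close> is an affine function of one standard Gaussian
  noise vector \<open>y\<close>: \<open>X\<^sub>j = m + u \<bullet> y\<close> and \<open>X\<^sup>~\<^sub>k = c\<^sub>k + v\<^sub>k \<bullet> y\<close>, where the covariance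
  \<open>2D - D\<Theta>D\<close> of the knockoff noise enters through a square root obtained by Cholesky elimination.
  One checks \<open>c\<^sub>j = m\<close>, \<open>|u| = |v\<^sub>j|\<close> (both variances are \<open>1/\<Theta>\<^sub>j\<^sub>j\<close>) and
  \<open>v\<^sub>k \<bullet> u = v\<^sub>k \<bullet> v\<^sub>j\<close> for \<open>k \<noteq> j\<close>. Hence the Householder reflection exchanging \<open>u\<close> and \<open>v\<^sub>j\<close>
  swaps \<open>X\<^sub>j\<close> with \<open>X\<^sup>~\<^sub>j\<close> and fixes all other coordinates; being orthogonal, it preserves the
  law of \<open>y\<close>. Mixing over the arbitrary law of \<open>X\<^sub>-\<^sub>j\<close> preserves this swap invariance.\<close>

section \<open>Square roots of positive semidefinite matrices\<close>

lemma matrix_vector_mult_axis_nth: "((S::real^'n^'m) *v axis k 1) $ i = S $ i $ k"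
  by (simp add: matrix_vector_mult_basis column_def)

lemma inner_axis_matrix_vector_mult_axis: "axis i 1 \<bullet> ((S::real^'n^'n) *v axis i 1) = S $ i $ i"
  by (simp add: inner_axis' matrix_vector_mult_axis_nth)

lemma psd_symmetric: "psd S \<Longrightarrow> (S::real^'n^'n) $ k $ i = S $ i $ k"
  unfolding psd_def by (metis transpose_def vec_lambda_beta)

lemma psd_diagonal_nonneg: "psd S \<Longrightarrow> 0 \<le> (S::real^'n^'n) $ i $ i"
  unfolding psd_def by (metis inner_axis_matrix_vector_mult_axis)

lemma quadratic_form_add_axis:
  fixes S :: "real^'n^'n"
  assumes "transpose S = S"
  shows "(v + t *\<^sub>R axis i 1) \<bullet> (S *v (v + t *\<^sub>R axis i 1))
     = v \<bullet> (S *v v) + 2 * t * (S *v v) $ i + t\<^sup>2 * S $ i $ i"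
proof -
  have "v \<bullet> (S *v axis i 1) = (transpose S *v v) \<bullet> axis i 1"
    by (simp add: dot_lmul_matrix[symmetric] vector_transpose_matrix)
  then have "v \<bullet> (S *v axis i 1) = (S *v v) $ i"
    by (simp add: assms inner_axis)
  then show ?thesis
    by (simp add: matrix_vector_right_distrib matrix_vector_mult_scaleR inner_add_left
        inner_add_right inner_axis' matrix_vector_mult_axis_nth power2_eq_square algebra_simps)
qed

lemma psd_Cauchy_Schwarz:
  fixes S :: "real^'n^'n"
  assumes "psd S"
  shows "((S *v v) $ i)\<^sup>2 \<le> S $ i $ i * (v \<bullet> (S *v v))"
proof -
  define q b c where "q = v \<bullet> (S *v v)" and "b = (S *v v) $ i" and "c = S $ i $ i"
  have nonneg: "0 \<le> q + 2 * t * b + t\<^sup>2 * c" for t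
    using assms quadratic_form_add_axis[of S v t i] unfolding psd_def q_def b_def c_def by metis
  have "c \<ge> 0" using psd_diagonal_nonneg[OF assms] by (simp add: c_def)
  show ?thesis
  proof (cases "c = 0")
    case True
    have "b = 0"
    proof (rule ccontr)
      assume "b \<noteq> 0"
      with True have "q + 2 * (-(q + 1) / (2 * b)) * b + (-(q + 1) / (2 * b))\<^sup>2 * c = -1"
        by (simp add: field_simps)
      with nonneg show False by (metis neg_0_le_iff_le not_one_le_zero)
    qed
    with True show ?thesis by (simp add: b_def c_def)
  next
    case False
    with \<open>c \<ge> 0\<close> have "c > 0" by simp
    have "q + 2 * (-b / c) * b + (-b / c)\<^sup>2 * c = q - b\<^sup>2 / c"
      using \<open>c > 0\<close> by (simp add: field_simps power2_eq_square)
    with nonneg[of "-b / c"] have "b\<^sup>2 / c \<le> q" by simp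
    with \<open>c > 0\<close> have "b\<^sup>2 \<le> c * q" by (simp add: divide_le_eq mult.commute)
    then show ?thesis by (simp add: b_def c_def q_def)
  qed
qed

lemma psd_zero_diagonal_row:
  assumes "psd (S::real^'n^'n)" "S $ i $ i = 0"
  shows "S $ i $ k = 0"
  using psd_Cauchy_Schwarz[OF assms(1), of "axis k 1" i] assms(2) by (simp add: matrix_vector_mult_axis_nth)

definition outer_product :: "real^'n \<Rightarrow> real^'n^'n" where
  "outer_product a = (\<chi> r k. a $ r * a $ k)"

lemma inner_outer_product: "v \<bullet> (outer_product a *v v) = (a \<bullet> v)\<^sup>2"
proof -
  have "v \<bullet> (outer_product a *v v) = (\<Sum>r\<in>UNIV. v $ r * (\<Sum>k\<in>UNIV. a $ r * a $ k * v $ k))"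
    by (simp add: outer_product_def inner_vec_def matrix_vector_mult_def)
  also have "\<dots> = (\<Sum>r\<in>UNIV. \<Sum>k\<in>UNIV. (v $ r * a $ r) * (a $ k * v $ k))"
    by (simp add: sum_distrib_left mult_ac)
  also have "\<dots> = (a \<bullet> v)\<^sup>2"
    by (simp add: sum_product[symmetric] inner_vec_def power2_eq_square mult.commute)
  finally show ?thesis .
qed

lemma psd_Schur_complement:
  fixes S :: "real^'n^'n"
  assumes psd: "psd S" and pivot: "S $ i $ i > 0"
  defines "a \<equiv> \<chi> r. S $ r $ i / sqrt (S $ i $ i)"
  shows "psd (S - outer_product a)"
    and "\<And>r k. (S - outer_product a) $ r $ k = S $ r $ k - S $ r $ i * S $ k $ i / S $ i $ i"
proof -
  show entry: "(S - outer_product a) $ r $ k = S $ r $ k - S $ r $ i * S $ k $ i / S $ i $ i" for r k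
    using pivot by (simp add: outer_product_def a_def real_sqrt_mult[symmetric] power2_eq_square[symmetric])
  have "transpose (S - outer_product a) = S - outer_product a"
    using psd_symmetric[OF psd] by (simp add: vec_eq_iff transpose_def outer_product_def mult.commute)
  moreover have "0 \<le> v \<bullet> ((S - outer_product a) *v v)" for v
  proof -
    have "a $ r = S $ i $ r / sqrt (S $ i $ i)" for r
      using psd_symmetric[OF psd, of r i] by (simp add: a_def)
    then have "a \<bullet> v = (S *v v) $ i / sqrt (S $ i $ i)"
      by (simp add: inner_vec_def matrix_vector_mult_def sum_divide_distrib mult.commute)
    then have "(a \<bullet> v)\<^sup>2 = ((S *v v) $ i)\<^sup>2 / S $ i $ i"
      using pivot by (simp add: power_divide)
    moreover have "v \<bullet> ((S - outer_product a) *v v) = v \<bullet> (S *v v) - (a \<bullet> v)\<^sup>2"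
      by (simp add: matrix_vector_mult_diff_rdistrib inner_diff_right inner_outer_product)
    moreover have "((S *v v) $ i)\<^sup>2 / S $ i $ i \<le> v \<bullet> (S *v v)"
      using psd_Cauchy_Schwarz[OF psd, of v i] pivot by (simp add: divide_le_eq mult.commute)
    ultimately show ?thesis by linarith
  qed
  ultimately show "psd (S - outer_product a)" by (simp add: psd_def)
qed

lemma mult_transpose_set_column:
  fixes A :: "real^'n^'n" and a :: "real^'n"
  assumes "\<And>r. A $ r $ i = 0"
  defines "B \<equiv> \<chi> r k. if k = i then a $ r else A $ r $ k"
  shows "B ** transpose B = A ** transpose A + outer_product a"
proof -
  have "(B ** transpose B) $ r $ t = (\<Sum>k\<in>UNIV. (if k = i then a $ r * a $ t else 0) + A $ r $ k * A $ t $ k)" for r t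
    by (auto simp: matrix_matrix_mult_def transpose_def B_def assms intro!: sum.cong)
  then show ?thesis
    by (simp add: vec_eq_iff sum.distrib matrix_matrix_mult_def transpose_def outer_product_def)
qed

lemma psd_factorization_supported:
  fixes S :: "real^'n^'n"
  assumes "finite I" "psd S" "\<And>r k. r \<notin> I \<or> k \<notin> I \<Longrightarrow> S $ r $ k = 0"
  shows "\<exists>A. A ** transpose A = S \<and> (\<forall>r k. k \<notin> I \<longrightarrow> A $ r $ k = 0)"
  using assms
proof (induction I arbitrary: S rule: finite_induct)
  case empty
  then have "S = 0" by (simp add: vec_eq_iff)
  then show ?case by (intro exI[of _ 0]) (simp add: vec_eq_iff matrix_matrix_mult_def)
next
  case (insert i I)
  show ?case
  proof (cases "S $ i $ i = 0")
    case True
    have "S $ r $ k = 0" if "r \<notin> I \<or> k \<notin> I" for r k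
      using that insert.prems psd_zero_diagonal_row[OF insert.prems(1) True]
        psd_symmetric[OF insert.prems(1), of r k] by (cases "r = i \<or> k = i") auto
    with insert.IH[OF insert.prems(1)] show ?thesis by blast
  next
    case False
    define a where "a = (\<chi> r. S $ r $ i / sqrt (S $ i $ i))"
    have pivot: "S $ i $ i > 0"
      using False psd_diagonal_nonneg[OF insert.prems(1), of i] by simp
    note Schur = psd_Schur_complement[OF insert.prems(1) pivot, folded a_def]
    have "(S - outer_product a) $ r $ k = 0" if "r \<notin> I \<or> k \<notin> I" for r k
      using that pivot insert.prems(2)[of r k] insert.prems(2)[of r i] insert.prems(2)[of k i]
        psd_symmetric[OF insert.prems(1), of k i]
      unfolding Schur(2) by (cases "r = i \<or> k = i") auto
    then obtain A where A: "A ** transpose A = S - outer_product a" "\<forall>r k. k \<notin> I \<longrightarrow> A $ r $ k = 0"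
      using insert.IH[OF Schur(1)] by blast
    define B where "B = (\<chi> r k. if k = i then a $ r else A $ r $ k)"
    have "B ** transpose B = S"
      unfolding B_def using A insert.hyps(2) by (subst mult_transpose_set_column) auto
    moreover have "\<forall>r k. k \<notin> insert i I \<longrightarrow> B $ r $ k = 0"
      using A(2) by (simp add: B_def)
    ultimately show ?thesis by blast
  qed
qed

lemma psd_factorization:
  assumes "psd (S::real^'n^'n)"
  shows "\<exists>A::real^'n^'n. A ** transpose A = S"
proof -
  have "\<exists>A::real^'n^'n. A ** transpose A = S \<and> (\<forall>r k. k \<notin> UNIV \<longrightarrow> A $ r $ k = 0)"
    by (rule psd_factorization_supported) (simp_all add: assms)
  then show ?thesis by blast
qed

section \<open>Standard Gaussian vectors\<close>

abbreviation std_normal :: "real measure" where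
  "std_normal \<equiv> density lborel std_normal_density"

lemma prob_space_std_normal: "prob_space std_normal"
  by (rule prob_space_normal_density) simp

lemma sets_std_normal: "sets std_normal = sets borel"
  by simp

interpretation std_normal_product: product_sigma_finite "\<lambda>_::'k. std_normal"
  unfolding product_sigma_finite_def
  using prob_space_std_normal prob_space_imp_sigma_finite by blast

lemma borel_measurable_linear:
  fixes T :: "'a::euclidean_space \<Rightarrow> 'b::euclidean_space"
  assumes "linear T"
  shows "T \<in> borel_measurable borel"
  using assms by (intro borel_measurable_continuous_onI linear_continuous_on)
    (simp add: linear_conv_bounded_linear)

lemma borel_measurable_vec_nth[measurable]: "(\<lambda>x::real^'k. x $ i) \<in> borel_measurable borel"
  by (intro borel_measurable_continuous_onI linear_continuous_on bounded_linear_vec_nth)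

lemma vec_lambda_eq_sum_axis: "vec_lambda f = (\<Sum>i\<in>UNIV. f i *\<^sub>R axis i (1::real))"
  by (simp add: vec_eq_iff sum_component axis_def if_distrib cong: if_cong)

lemma borel_measurable_vec_lambda[measurable (raw)]:
  assumes "\<And>i. (\<lambda>x. g x i) \<in> borel_measurable M"
  shows "(\<lambda>x. (vec_lambda (g x) :: real^'k)) \<in> borel_measurable M"
  unfolding vec_lambda_eq_sum_axis using assms by measurable

lemma measurable_vec_lambda_PiM:
  assumes "\<And>i. sets (M i) = sets (borel::real measure)"
  shows "(\<lambda>f. vec_lambda f :: real^'k) \<in> measurable (PiM UNIV M) borel"
proof (rule borel_measurable_vec_lambda)
  fix i :: 'k
  have "(\<lambda>f. f i) \<in> measurable (PiM UNIV M) (M i)" by (rule measurable_component_singleton) simp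
  then show "(\<lambda>f. f i) \<in> borel_measurable (PiM UNIV M)"
    using assms measurable_cong_sets by blast
qed

lemma measurable_vec_nth_PiM:
  assumes "\<And>i. sets (M i) = sets (borel::real measure)"
  shows "(\<lambda>x::real^'k. \<lambda>i. x $ i) \<in> measurable borel (PiM UNIV M)"
proof (rule measurable_PiM_single')
  show "(\<lambda>x::real^'k. x $ i) \<in> borel \<rightarrow>\<^sub>M M i" for i
    by (subst measurable_cong_sets[OF refl assms[of i]]) (rule borel_measurable_vec_nth)
  show "(\<lambda>x::real^'k. \<lambda>i. x $ i) \<in> space borel \<rightarrow> (\<Pi>\<^sub>E i\<in>UNIV. space (M i))"
    using sets_eq_imp_space_eq[OF assms] by simp
qed

lemma sets_coordinate_box:
  assumes "\<And>i. A i \<in> sets borel"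
  shows "{x::real^'k. \<forall>i. x $ i \<in> A i} \<in> sets borel"
proof -
  have "(\<lambda>x::real^'k. x $ i) -` A i \<in> sets borel" for i
    using measurable_sets[OF borel_measurable_vec_nth assms[of i]] by simp
  moreover have "{x::real^'k. \<forall>i. x $ i \<in> A i} = (\<Inter>i. (\<lambda>x. x $ i) -` A i)"
    by auto
  ultimately show ?thesis by (auto intro: sets.countable_INT)
qed

lemma prob_space_std_gauss_vec: "prob_space (std_gauss_vec :: (real^'k) measure)"
  unfolding std_gauss_vec_def
  by (intro prob_space.prob_space_distr prob_space_PiM prob_space_std_normal measurable_vec_lambda_PiM) simp

lemma sets_std_gauss_vec[simp]: "sets (std_gauss_vec :: (real^'k) measure) = sets borel"
  by (simp add: std_gauss_vec_def)

lemma space_std_gauss_vec[simp]: "space (std_gauss_vec :: (real^'k) measure) = UNIV"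
  using sets_eq_imp_space_eq[OF sets_std_gauss_vec] by simp

lemma emeasure_std_gauss_vec_coordinate_box:
  assumes "\<And>i. A i \<in> sets borel"
  shows "emeasure (std_gauss_vec :: (real^'k) measure) {x. \<forall>i. x $ i \<in> A i}
       = (\<Prod>i\<in>UNIV. emeasure std_normal (A i))"
proof -
  have "(\<lambda>f. vec_lambda f :: real^'k) -` {x. \<forall>i. x $ i \<in> A i} \<inter> space (PiM UNIV (\<lambda>_. std_normal))
      = PiE UNIV A"
    by (auto simp: space_PiM)
  then show ?thesis
    unfolding std_gauss_vec_def
    using assms by (subst emeasure_distr) (auto intro: measurable_vec_lambda_PiM sets_coordinate_box
        std_normal_product.emeasure_PiM)
qed

lemma std_gauss_vec_eqI:
  fixes M :: "(real^'k) measure"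
  assumes sets_M: "sets M = sets borel"
    and box: "\<And>A. (\<And>i. A i \<in> sets borel) \<Longrightarrow>
      emeasure M {x. \<forall>i. x $ i \<in> A i} = (\<Prod>i\<in>UNIV. emeasure std_normal (A i))"
  shows "M = std_gauss_vec"
proof -
  let ?P = "PiM UNIV (\<lambda>_::'k. std_normal)"
  have coords: "(\<lambda>x::real^'k. \<lambda>i. x $ i) \<in> measurable M ?P"
    using measurable_vec_nth_PiM[of "\<lambda>_. std_normal"] measurable_cong_sets[OF sets_M refl] by auto
  have "distr M ?P (\<lambda>x i. x $ i) = ?P"
  proof (rule std_normal_product.PiM_eqI)
    fix A :: "'k \<Rightarrow> real set" assume A: "\<And>i. i \<in> UNIV \<Longrightarrow> A i \<in> sets std_normal"
    have "(\<lambda>x i. x $ i) -` PiE UNIV A \<inter> space M = {x. \<forall>i. x $ i \<in> A i}"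
      using sets_eq_imp_space_eq[OF sets_M] by auto
    then show "emeasure (distr M ?P (\<lambda>x i. x $ i)) (PiE UNIV A) = (\<Prod>i\<in>UNIV. emeasure std_normal (A i))"
      using A by (subst emeasure_distr[OF coords]) (auto intro!: sets_PiM_I_finite box)
  qed auto
  moreover have "M = distr (distr M ?P (\<lambda>x i. x $ i)) borel vec_lambda"
    using distr_id2[OF sets_M[symmetric]]
    by (subst distr_distr[OF measurable_vec_lambda_PiM coords]) (simp_all add: comp_def)
  ultimately show ?thesis by (simp add: std_gauss_vec_def)
qed

lemma emeasure_eq_scaled_std_gauss_vec:
  fixes M :: "(real^'k) measure"
  assumes sets_M: "sets M = sets borel" and finite: "c < top"
    and box: "\<And>A. (\<And>i. A i \<in> sets borel) \<Longrightarrow>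
      emeasure M {x. \<forall>i. x $ i \<in> A i} = c * (\<Prod>i\<in>UNIV. emeasure std_normal (A i))"
    and B: "B \<in> sets borel"
  shows "emeasure M B = c * emeasure std_gauss_vec B"
proof (cases "c = 0")
  case True
  then have "emeasure M UNIV = 0" using box[of "\<lambda>_. UNIV"] by simp
  moreover have "emeasure M B \<le> emeasure M UNIV"
    using B sets_M by (intro emeasure_mono) auto
  ultimately show ?thesis using True by simp
next
  case False
  then have inverse_c: "inverse c * c = 1"
    using finite by (cases c rule: ennreal_cases) (auto simp: inverse_ennreal ennreal_mult[symmetric])
  have "density M (\<lambda>_. inverse c) = std_gauss_vec"
  proof (rule std_gauss_vec_eqI)
    fix A :: "'k \<Rightarrow> real set" assume "\<And>i. A i \<in> sets borel"
    then show "emeasure (density M (\<lambda>_. inverse c)) {x. \<forall>i. x $ i \<in> A i}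
        = (\<Prod>i\<in>UNIV. emeasure std_normal (A i))"
      using sets_M inverse_c
      by (simp add: emeasure_density_const sets_coordinate_box box mult.assoc[symmetric])
  qed (simp add: sets_M)
  then have "emeasure std_gauss_vec B = inverse c * emeasure M B"
    using B sets_M by (metis emeasure_density_const)
  then show ?thesis
    using inverse_c by (simp add: mult.assoc[symmetric] mult.commute)
qed

definition std_gauss_vec_density :: "real^'k \<Rightarrow> real" where
  "std_gauss_vec_density x = (\<Prod>i\<in>UNIV. std_normal_density (x $ i))"

lemma borel_measurable_std_gauss_vec_density[measurable]:
  "std_gauss_vec_density \<in> borel_measurable borel"
  unfolding std_gauss_vec_density_def by measurable

lemma std_gauss_vec_density_eq_exp:
  "std_gauss_vec_density (x::real^'k) = (1 / sqrt (2 * pi)) ^ CARD('k) * exp (- (x \<bullet> x) / 2)"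
proof -
  have "std_gauss_vec_density x = (\<Prod>i\<in>UNIV. (1 / sqrt (2 * pi)) * exp (- (x $ i)\<^sup>2 / 2))"
    by (simp add: std_gauss_vec_density_def normal_density_def)
  also have "\<dots> = (1 / sqrt (2 * pi)) ^ CARD('k) * (\<Prod>i\<in>UNIV. exp (- (x $ i)\<^sup>2 / 2))"
    by (simp only: prod.distrib prod_constant)
  also have "(\<Prod>i\<in>UNIV. exp (- (x $ i)\<^sup>2 / 2)) = exp (\<Sum>i\<in>UNIV. - (x $ i)\<^sup>2 / 2)"
    by (simp add: exp_sum)
  also have "(\<Sum>i\<in>UNIV. - (x $ i)\<^sup>2 / 2) = - (x \<bullet> x) / 2"
    by (simp add: inner_vec_def power2_eq_square sum_divide_distrib[symmetric] sum_negf)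
  finally show ?thesis .
qed

lemma std_gauss_vec_eq_density:
  "(std_gauss_vec :: (real^'k) measure) = density lborel (\<lambda>x. ennreal (std_gauss_vec_density x))"
proof (rule std_gauss_vec_eqI[symmetric])
  fix A :: "'k \<Rightarrow> real set" assume A: "\<And>i. A i \<in> sets borel"
  have inj: "inj (\<lambda>i::'k. axis i (1::real))" by (auto simp: inj_on_def axis_eq_axis)
  have Basis: "(Basis :: (real^'k) set) = range (\<lambda>i. axis i 1)"
    by (auto simp: Basis_vec_def)
  define f :: "real^'k \<Rightarrow> real \<Rightarrow> ennreal" where
    "f b t = ennreal (std_normal_density t) * indicator (A (inv (\<lambda>i. axis i (1::real)) b)) t" for b t
  have f_axis: "f (axis i 1) = (\<lambda>t. ennreal (std_normal_density t) * indicator (A i) t)" for i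
    using inv_f_f[OF inj, of i] by (simp add: f_def fun_eq_iff)
  have "emeasure (density lborel (\<lambda>x. ennreal (std_gauss_vec_density x))) {x::real^'k. \<forall>i. x $ i \<in> A i}
      = (\<integral>\<^sup>+x. ennreal (std_gauss_vec_density x) * indicator {x::real^'k. \<forall>i. x $ i \<in> A i} x \<partial>lborel)"
    using sets_coordinate_box[OF A] by (intro emeasure_density) auto
  also have "\<dots> = (\<integral>\<^sup>+x. (\<Prod>b\<in>Basis. f b (x \<bullet> b)) \<partial>lborel)"
  proof (rule nn_integral_cong)
    fix x :: "real^'k"
    have "(\<Prod>b\<in>Basis. f b (x \<bullet> b))
        = (\<Prod>i\<in>UNIV. ennreal (std_normal_density (x $ i)) * indicator (A i) (x $ i))"
      unfolding Basis by (simp add: prod.reindex[OF inj] f_axis inner_axis)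
    also have "\<dots> = ennreal (std_gauss_vec_density x) * indicator {x::real^'k. \<forall>i. x $ i \<in> A i} x"
      unfolding prod.distrib std_gauss_vec_density_def
      by (subst prod_ennreal) (auto simp: indicator_def prod_zero_iff)
    finally show "ennreal (std_gauss_vec_density x) * indicator {x::real^'k. \<forall>i. x $ i \<in> A i} x
        = (\<Prod>b\<in>Basis. f b (x \<bullet> b))" ..
  qed
  also have "\<dots> = (\<Prod>b\<in>Basis. (\<integral>\<^sup>+t. f b t \<partial>lborel))"
    using A by (intro nn_integral_lborel_prod) (simp_all add: f_def)
  also have "\<dots> = (\<Prod>i\<in>UNIV. emeasure std_normal (A i))"
    unfolding Basis using A by (simp add: prod.reindex[OF inj] f_axis emeasure_density)
  finally show "emeasure (density lborel (\<lambda>x. ennreal (std_gauss_vec_density x))) {x. \<forall>i. x $ i \<in> A i}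
      = (\<Prod>i\<in>UNIV. emeasure std_normal (A i))" .
qed simp

lemma distr_lborel_orthogonal_transformation:
  fixes T :: "real^'k::{finite,wellorder} \<Rightarrow> real^'k::_"
  assumes T: "orthogonal_transformation T"
  shows "distr lborel borel T = lborel"
proof (rule lborel_eqI[symmetric])
  have T_meas: "T \<in> measurable lborel borel"
    using borel_measurable_linear[OF orthogonal_transformation_linear[OF T]] by simp
  define U where "U = inv T"
  have U: "orthogonal_transformation U"
    unfolding U_def by (rule orthogonal_transformation_inv[OF T])
  have preimage: "T -` box l u = U ` box l u" for l u
    using orthogonal_transformation_inj[OF T] orthogonal_transformation_surj[OF T]
    by (auto simp: U_def image_iff surj_f_inv_f) (metis inv_f_f)
  have bounded: "bounded (U ` box l u)" for l u
    using orthogonal_transformation_linear[OF U]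
    by (intro bounded_linear_image bounded_box) (simp add: linear_conv_bounded_linear)
  fix l u :: "real^'k::_" assume lu: "\<And>b. b \<in> Basis \<Longrightarrow> l \<bullet> b \<le> u \<bullet> b"
  have U_box: "U ` box l u \<in> sets borel"
    using measurable_sets[OF T_meas, of "box l u"] preimage by simp
  have "emeasure (distr lborel borel T) (box l u) = emeasure lborel (U ` box l u)"
    using emeasure_distr[OF T_meas, of "box l u"] preimage by simp
  also have "\<dots> = ennreal (measure lborel (U ` box l u))"
    using emeasure_bounded_finite[OF bounded, of l u] by (intro emeasure_eq_ennreal_measure) simp
  also have "measure lborel (U ` box l u) = measure lebesgue (U ` box l u)"
    using U_box by simp
  also have "\<dots> = measure lebesgue (box l u)"
    using U by (rule measure_orthogonal_image) simp
  also have "\<dots> = measure lborel (box l u)"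
    by simp
  also have "ennreal \<dots> = emeasure lborel (box l u)"
    using emeasure_bounded_finite[of "box l u"] by (intro emeasure_eq_ennreal_measure[symmetric]) simp
  finally show "emeasure (distr lborel borel T) (box l u) = (\<Prod>b\<in>Basis. (u - l) \<bullet> b)"
    using lu by simp
qed simp

theorem distr_std_gauss_vec_orthogonal_transformation:
  fixes T :: "real^'k::{finite,wellorder} \<Rightarrow> real^'k::_"
  assumes T: "orthogonal_transformation T"
  shows "distr std_gauss_vec borel T = std_gauss_vec"
proof -
  have T_meas: "T \<in> measurable lborel borel"
    using borel_measurable_linear[OF orthogonal_transformation_linear[OF T]] by simp
  have "std_gauss_vec_density (T x) = std_gauss_vec_density x" for x
    using T by (simp add: std_gauss_vec_density_eq_exp orthogonal_transformation_def)
  then have "distr std_gauss_vec borel T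
      = distr (density lborel (\<lambda>x. ennreal (std_gauss_vec_density (T x)))) borel T"
    by (simp add: std_gauss_vec_eq_density)
  also have "\<dots> = density (distr lborel borel T) (\<lambda>x. ennreal (std_gauss_vec_density x))"
    by (rule density_distr[symmetric, OF _ T_meas]) simp
  finally show ?thesis
    by (simp add: distr_lborel_orthogonal_transformation[OF T] std_gauss_vec_eq_density)
qed

lemma emeasure_std_gauss_vec_split_box:
  fixes a :: "'b::finite" and \<iota> :: "'k::finite \<Rightarrow> 'b"
  assumes inj: "inj \<iota>" and a: "a \<notin> range \<iota>"
    and A: "A \<in> sets borel" and B: "\<And>i. B i \<in> sets borel"
  shows "emeasure (std_gauss_vec :: (real^'b) measure) {y. y $ a \<in> A \<and> (\<forall>i. y $ \<iota> i \<in> B i)}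
       = emeasure std_normal A * (\<Prod>i\<in>UNIV. emeasure std_normal (B i))"
proof -
  define C where "C b = (if b = a then A else if b \<in> range \<iota> then B (inv \<iota> b) else UNIV)" for b
  have "C (\<iota> i) = B i" for i
    using a by (auto simp: C_def inv_f_f[OF inj])
  then have "y $ \<iota> i \<in> B i" if "\<forall>b. y $ b \<in> C b" for y i
    using that by metis
  then have "{y. y $ a \<in> A \<and> (\<forall>i. y $ \<iota> i \<in> B i)} = {y::real^'b. \<forall>b. y $ b \<in> C b}"
    by (auto simp: C_def inv_f_f[OF inj])
  moreover have "C b \<in> sets borel" for b
    using A B by (simp add: C_def)
  ultimately have "emeasure (std_gauss_vec :: (real^'b) measure) {y. y $ a \<in> A \<and> (\<forall>i. y $ \<iota> i \<in> B i)}
      = (\<Prod>b\<in>UNIV. emeasure std_normal (C b))"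
    by (simp add: emeasure_std_gauss_vec_coordinate_box)
  also have "\<dots> = (\<Prod>b\<in>UNIV. (if b = a then emeasure std_normal A else 1)
      * (if b \<in> range \<iota> then emeasure std_normal (B (inv \<iota> b)) else 1))"
    using a prob_space.emeasure_space_1[OF prob_space_std_normal]
    by (intro prod.cong) (auto simp: C_def)
  also have "\<dots> = emeasure std_normal A * (\<Prod>b\<in>range \<iota>. emeasure std_normal (B (inv \<iota> b)))"
    by (simp add: prod.distrib prod.inter_restrict[symmetric])
  also have "(\<Prod>b\<in>range \<iota>. emeasure std_normal (B (inv \<iota> b))) = (\<Prod>i\<in>UNIV. emeasure std_normal (B i))"
    by (simp add: prod.reindex[OF inj] inv_f_f[OF inj])
  finally show ?thesis .
qed

lemma distr_std_gauss_vec_coordinate_split: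
  fixes a :: "'b::finite" and \<iota> :: "'k::finite \<Rightarrow> 'b"
  assumes inj: "inj \<iota>" and a: "a \<notin> range \<iota>"
  shows "distr (std_gauss_vec :: (real^'b) measure) borel (\<lambda>y. (y $ a, \<chi> i. y $ \<iota> i))
       = std_normal \<Otimes>\<^sub>M (std_gauss_vec :: (real^'k) measure)"
proof (rule pair_measure_eqI[symmetric])
  show "sigma_finite_measure std_normal" "sigma_finite_measure (std_gauss_vec :: (real^'k) measure)"
    using prob_space_std_normal prob_space_std_gauss_vec by (auto intro: prob_space_imp_sigma_finite)
  have "sets (std_normal \<Otimes>\<^sub>M (std_gauss_vec :: (real^'k) measure))
      = sets (borel \<Otimes>\<^sub>M (borel :: (real^'k) measure))"
    by (rule sets_pair_measure_cong) simp_all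
  then show "sets (std_normal \<Otimes>\<^sub>M (std_gauss_vec :: (real^'k) measure))
      = sets (distr (std_gauss_vec :: (real^'b) measure) borel (\<lambda>y. (y $ a, \<chi> i. y $ \<iota> i)))"
    by (simp only: borel_prod sets_distr)
  fix A :: "real set" and B :: "(real^'k) set"
  assume "A \<in> sets std_normal" "B \<in> sets std_gauss_vec"
  then have A: "A \<in> sets borel" and B: "B \<in> sets borel" by simp_all
  define proj :: "real^'b \<Rightarrow> real^'k" where "proj y = (\<chi> i. y $ \<iota> i)" for y
  have proj_meas[measurable]: "proj \<in> borel_measurable borel"
    unfolding proj_def by measurable
  have split_meas: "(\<lambda>y. (y $ a, proj y)) \<in> measurable (std_gauss_vec :: (real^'b) measure) borel"
    unfolding borel_prod[symmetric] measurable_cong_sets[OF sets_std_gauss_vec refl] by measurable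
  define S where "S = {y::real^'b. y $ a \<in> A}"
  have S: "S \<in> sets borel"
    using measurable_sets[OF borel_measurable_vec_nth A] by (simp add: S_def vimage_def)
  define \<nu> where "\<nu> = distr (density (std_gauss_vec :: (real^'b) measure) (indicator S)) borel proj"
  have \<nu>: "emeasure \<nu> X = emeasure std_gauss_vec {y. y $ a \<in> A \<and> proj y \<in> X}" if X: "X \<in> sets borel" for X
  proof -
    have "measurable (density (std_gauss_vec :: (real^'b) measure) (indicator S)) borel
        = measurable borel (borel :: (real^'k) measure)"
      by (rule measurable_cong_sets) simp_all
    then have "emeasure \<nu> X = emeasure (density std_gauss_vec (indicator S)) (proj -` X)"
      unfolding \<nu>_def using X by (subst emeasure_distr) simp_all
    also have "\<dots> = emeasure std_gauss_vec (S \<inter> proj -` X)"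
      using S measurable_sets[OF proj_meas X] by (intro emeasure_restricted) simp_all
    also have "S \<inter> proj -` X = {y. y $ a \<in> A \<and> proj y \<in> X}"
      by (auto simp: S_def)
    finally show ?thesis .
  qed
  have AB: "A \<times> B \<in> sets (borel :: (real \<times> (real^'k)) measure)"
    using A B by (simp add: borel_prod[symmetric])
  have "emeasure (distr std_gauss_vec borel (\<lambda>y. (y $ a, proj y))) (A \<times> B) = emeasure \<nu> B"
    using emeasure_distr[OF split_meas AB] \<nu>[OF B] by (simp add: vimage_def Int_def)
  also have "\<dots> = emeasure std_normal A * emeasure std_gauss_vec B"
  proof (rule emeasure_eq_scaled_std_gauss_vec[OF _ _ _ B])
    show "sets \<nu> = sets borel" by (simp add: \<nu>_def)
    show "emeasure std_normal A < top"
      using prob_space.emeasure_le_1[OF prob_space_std_normal, of A] by (simp add: order_le_less_trans)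
    fix C :: "'k \<Rightarrow> real set" assume "\<And>i. C i \<in> sets borel"
    then show "emeasure \<nu> {x. \<forall>i. x $ i \<in> C i} = emeasure std_normal A * (\<Prod>i\<in>UNIV. emeasure std_normal (C i))"
      using A by (simp add: \<nu> sets_coordinate_box proj_def emeasure_std_gauss_vec_split_box[OF inj a])
  qed
  finally show "emeasure std_normal A * emeasure std_gauss_vec B
      = emeasure (distr std_gauss_vec borel (\<lambda>y. (y $ a, \<chi> i. y $ \<iota> i))) (A \<times> B)"
    by (simp add: proj_def)
qed

section \<open>Householder reflections\<close>

definition householder :: "'a::real_inner \<Rightarrow> 'a \<Rightarrow> 'a \<Rightarrow> 'a" where
  "householder p q y =
     (if p = q then y else y - (2 * ((p - q) \<bullet> y) / ((p - q) \<bullet> (p - q))) *\<^sub>R (p - q))"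

lemma orthogonal_transformation_householder:
  "orthogonal_transformation (householder (p::'a::real_inner) q)"
proof (cases "p = q")
  case True
  then show ?thesis
    by (simp add: householder_def[abs_def] orthogonal_transformation_id[unfolded id_def])
next
  case False
  define v where "v = p - q"
  have v: "v \<bullet> v \<noteq> 0" using False by (simp add: v_def)
  have H: "householder p q = (\<lambda>y. y - (2 * (v \<bullet> y) / (v \<bullet> v)) *\<^sub>R v)"
    using False by (simp add: householder_def[abs_def] v_def)
  show ?thesis
    unfolding orthogonal_transformation_def H
  proof (intro conjI allI)
    show "linear (\<lambda>y. y - (2 * (v \<bullet> y) / (v \<bullet> v)) *\<^sub>R v)"
      by (intro linearI) (simp_all add: inner_add_right add_divide_distrib scaleR_add_left algebra_simps)
    show "(y - (2 * (v \<bullet> y) / (v \<bullet> v)) *\<^sub>R v) \<bullet> (w - (2 * (v \<bullet> w) / (v \<bullet> v)) *\<^sub>R v) = y \<bullet> w" for y w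
      using v by (simp add: inner_diff_left inner_diff_right inner_commute field_simps)
  qed
qed

lemma inner_householder:
  fixes p q :: "'a::real_inner"
  assumes norm_eq: "p \<bullet> p = q \<bullet> q"
  shows "p \<bullet> householder p q y = q \<bullet> y"
    and "q \<bullet> householder p q y = p \<bullet> y"
    and "r \<bullet> p = r \<bullet> q \<Longrightarrow> r \<bullet> householder p q y = r \<bullet> y"
proof -
  define v where "v = p - q"
  show "p \<bullet> householder p q y = q \<bullet> y"
  proof (cases "p = q")
    case False
    have "v \<bullet> v = 2 * (p \<bullet> v)"
      using norm_eq by (simp add: v_def inner_diff_left inner_diff_right inner_commute)
    moreover have "v \<bullet> v \<noteq> 0"
      using False by (simp add: v_def)
    ultimately have "p \<bullet> y - (2 * (v \<bullet> y) / (v \<bullet> v)) * (p \<bullet> v) = p \<bullet> y - v \<bullet> y"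
      by (simp add: field_simps)
    with False show ?thesis
      by (simp add: householder_def v_def[symmetric] inner_diff_right) (simp add: v_def inner_diff_left)
  qed (simp add: householder_def)
  show "q \<bullet> householder p q y = p \<bullet> y"
  proof (cases "p = q")
    case False
    have "v \<bullet> v = - 2 * (q \<bullet> v)"
      using norm_eq by (simp add: v_def inner_diff_left inner_diff_right inner_commute)
    moreover have "v \<bullet> v \<noteq> 0"
      using False by (simp add: v_def)
    ultimately have "q \<bullet> y - (2 * (v \<bullet> y) / (v \<bullet> v)) * (q \<bullet> v) = q \<bullet> y + v \<bullet> y"
      by (simp add: field_simps)
    with False show ?thesis
      by (simp add: householder_def v_def[symmetric] inner_diff_right) (simp add: v_def inner_diff_left)
  qed (simp add: householder_def)
  show "r \<bullet> p = r \<bullet> q \<Longrightarrow> r \<bullet> householder p q y = r \<bullet> y"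
    by (simp add: householder_def inner_diff_right)
qed

section \<open>The knockoff pair as a function of one standard Gaussian vector\<close>

definition vec_extend :: "'b \<Rightarrow> ('k \<Rightarrow> 'b) \<Rightarrow> real \<Rightarrow> real^'k \<Rightarrow> real^'b" where
  "vec_extend a \<iota> \<alpha> w = (\<chi> b. if b = a then \<alpha> else if b \<in> range \<iota> then w $ inv \<iota> b else 0)"

lemma inner_vec_extend:
  fixes a :: "'b::finite" and \<iota> :: "'k::finite \<Rightarrow> 'b"
  assumes inj: "inj \<iota>" and a: "a \<notin> range \<iota>"
  shows "vec_extend a \<iota> \<alpha> w \<bullet> y = \<alpha> * y $ a + (\<Sum>i\<in>UNIV. w $ i * y $ \<iota> i)"
proof -
  have "vec_extend a \<iota> \<alpha> w \<bullet> y
      = (\<Sum>b\<in>UNIV. (if b = a then \<alpha> * y $ a else 0) + (if b \<in> range \<iota> then w $ inv \<iota> b * y $ b else 0))"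
    unfolding vec_extend_def inner_vec_def using a by (intro sum.cong) auto
  also have "\<dots> = \<alpha> * y $ a + (\<Sum>b\<in>range \<iota>. w $ inv \<iota> b * y $ b)"
    by (simp add: sum.distrib sum.inter_restrict[symmetric])
  also have "(\<Sum>b\<in>range \<iota>. w $ inv \<iota> b * y $ b) = (\<Sum>i\<in>UNIV. w $ i * y $ \<iota> i)"
    by (simp add: sum.reindex[OF inj] inv_f_f[OF inj])
  finally show ?thesis .
qed

lemma inner_vec_extend_vec_extend:
  fixes a :: "'b::finite" and \<iota> :: "'k::finite \<Rightarrow> 'b"
  assumes "inj \<iota>" "a \<notin> range \<iota>"
  shows "vec_extend a \<iota> \<alpha> w \<bullet> vec_extend a \<iota> \<beta> u = \<alpha> * \<beta> + w \<bullet> u"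
proof -
  have "vec_extend a \<iota> \<beta> u $ \<iota> i = u $ i" for i
    using assms by (auto simp: vec_extend_def inv_f_f)
  moreover have "vec_extend a \<iota> \<beta> u $ a = \<beta>"
    by (simp add: vec_extend_def)
  ultimately show ?thesis
    unfolding inner_vec_extend[OF assms] by (simp add: inner_vec_def)
qed

lemma sum_UNIV_eq_single:
  "(\<And>m. m \<noteq> k \<Longrightarrow> g m = 0) \<Longrightarrow> (\<Sum>m\<in>(UNIV::'k::finite set). g m) = (g k :: 'a::comm_monoid_add)"
  by (simp add: sum.remove[of UNIV k])

lemma diagm_nth: "diagm d $ k $ l = (if k = l then d $ k else 0)"
  by (simp add: diagm_def)

lemma diagm_mult_nth: "(diagm d ** M) $ k $ l = d $ k * (M::real^'n^'n) $ k $ l"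
  unfolding matrix_matrix_mult_def diagm_def by (simp add: sum_UNIV_eq_single[of k])

lemma mult_diagm_nth: "((M::real^'n^'n) ** diagm d) $ k $ l = M $ k $ l * d $ l"
  unfolding matrix_matrix_mult_def diagm_def by (simp add: sum_UNIV_eq_single[of l])

lemma vupd_add_axis: "vupd x j (u + t) = vupd x j u + t *\<^sub>R axis j 1"
  by (simp add: vec_eq_iff vupd_def axis_def)

text \<open>The index \<open>a\<close> and the embedding \<open>\<iota>\<close> of the coordinates of \<open>'n\<close> into \<open>'b\<close> realise
  the independent pair (\<open>N(0,1)\<close> noise of \<open>X\<^sub>j\<close>, standard Gaussian noise of the knockoff) as
  one standard Gaussian vector on \<open>'b\<close>.\<close>
locale knockoff_setting =
  fixes Th :: "real^'n^'n" and d :: "real^'n" and j :: 'n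
    and a :: "'b::{finite,wellorder}" and \<iota> :: "'n \<Rightarrow> 'b"
  assumes Th_symmetric: "transpose Th = Th" and Th_jj_pos: "Th $ j $ j > 0"
    and psd_cov: "psd (2 *\<^sub>R diagm d - diagm d ** Th ** diagm d)"
    and inj: "inj \<iota>" and a: "a \<notin> range \<iota>"
begin

definition "cov_root = (SOME A :: real^'n^'n. A ** transpose A = 2 *\<^sub>R diagm d - diagm d ** Th ** diagm d)"
definition "mean_map = mat 1 - diagm d ** Th"
definition "cond_mean x = (\<Sum>k\<in>UNIV - {j}. x $ k * (- Th $ k $ j / Th $ j $ j))"
definition "cond_sd = sqrt (1 / Th $ j $ j)"

text \<open>The pair \<open>(X, X\<^sup>~)\<close> given \<open>X\<^sub>-\<^sub>j = x\<^sub>-\<^sub>j\<close>, as a function of the noise \<open>e\<close> of \<open>X\<^sub>j\<close> and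
  the noise \<open>z\<close> of the knockoff, and then of a single noise vector \<open>y\<close>.\<close>
definition "pair_sample x =
  (\<lambda>(e, z). let x' = vupd x j (cond_mean x + cond_sd * e) in (x', mean_map *v x' + cov_root *v z))"
definition "sample x y = pair_sample x (y $ a, \<chi> i. y $ \<iota> i)"

definition "orig_dir = vec_extend a \<iota> cond_sd 0"
definition "knock_dir k = vec_extend a \<iota> (cond_sd * mean_map $ k $ j) (cov_root $ k)"
definition "knock_offset x = mean_map *v vupd x j (cond_mean x)"

lemma cov_root: "cov_root ** transpose cov_root = 2 *\<^sub>R diagm d - diagm d ** Th ** diagm d"
  unfolding cov_root_def using psd_factorization[OF psd_cov] by (rule someI_ex)

lemma Th_symmetric_nth: "Th $ k $ l = Th $ l $ k"
  using Th_symmetric by (metis transpose_def vec_lambda_beta)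

lemma mean_map_nth: "mean_map $ k $ l = (if k = l then 1 else 0) - d $ k * Th $ k $ l"
  by (simp add: mean_map_def diagm_mult_nth mat_def)

lemma inner_cov_root_rows:
  "cov_root $ k \<bullet> cov_root $ l = 2 * (if k = l then d $ k else 0) - d $ k * Th $ k $ l * d $ l"
proof -
  have "cov_root $ k \<bullet> cov_root $ l = (cov_root ** transpose cov_root) $ k $ l"
    by (simp add: matrix_matrix_mult_def transpose_def inner_vec_def)
  then show ?thesis
    by (simp add: cov_root diagm_mult_nth mult_diagm_nth diagm_nth)
qed

lemma inner_orig_dir: "orig_dir \<bullet> y = cond_sd * y $ a"
  by (simp add: orig_dir_def inner_vec_extend[OF inj a])

lemma inner_knock_dir:
  "knock_dir k \<bullet> y = cond_sd * mean_map $ k $ j * y $ a + (cov_root *v (\<chi> i. y $ \<iota> i)) $ k"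
  by (simp add: knock_dir_def inner_vec_extend[OF inj a] matrix_vector_mult_def)

lemma sample_eq_inner:
  "sample x y = (vupd x j (cond_mean x + orig_dir \<bullet> y), knock_offset x + (\<chi> k. knock_dir k \<bullet> y))"
proof -
  have x: "vupd x j (cond_mean x + cond_sd * y $ a) = vupd x j (cond_mean x) + (cond_sd * y $ a) *\<^sub>R axis j 1"
    by (rule vupd_add_axis)
  have "(mean_map *v vupd x j (cond_mean x + cond_sd * y $ a) + cov_root *v (\<chi> i. y $ \<iota> i)) $ k
      = knock_offset x $ k + knock_dir k \<bullet> y" for k
    by (simp add: x matrix_vector_right_distrib matrix_vector_mult_scaleR matrix_vector_mult_axis_nth
        knock_offset_def inner_knock_dir)
  then show ?thesis
    by (simp add: sample_def pair_sample_def Let_def inner_orig_dir vec_eq_iff)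
qed

text \<open>The knockoff coordinate \<open>j\<close> has the same conditional mean as \<open>X\<^sub>j\<close>: this is the
  equation \<open>\<Theta>\<^sub>j\<^sub>j m + \<Sigma>\<^sub>k\<^sub>\<noteq>\<^sub>j \<Theta>\<^sub>j\<^sub>k x\<^sub>k = 0\<close> defining the conditional mean \<open>m\<close>.\<close>
lemma knock_offset_nth_j: "knock_offset x $ j = cond_mean x"
proof -
  define x0 where "x0 = vupd x j (cond_mean x)"
  have "knock_offset x $ j = (\<Sum>l\<in>UNIV. ((if j = l then 1 else 0) - d $ j * Th $ j $ l) * x0 $ l)"
    by (simp add: knock_offset_def x0_def matrix_vector_mult_def mean_map_nth)
  also have "\<dots> = (\<Sum>l\<in>UNIV. (if j = l then x0 $ l else 0) - d $ j * (Th $ j $ l * x0 $ l))"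
    by (intro sum.cong) (auto simp: algebra_simps)
  also have "\<dots> = x0 $ j - d $ j * (\<Sum>l\<in>UNIV. Th $ j $ l * x0 $ l)"
    by (simp add: sum_subtractf sum_distrib_left)
  also have "(\<Sum>l\<in>UNIV. Th $ j $ l * x0 $ l) = Th $ j $ j * x0 $ j + (\<Sum>l\<in>UNIV - {j}. Th $ j $ l * x0 $ l)"
    by (simp add: sum.remove[of UNIV j])
  also have "(\<Sum>l\<in>UNIV - {j}. Th $ j $ l * x0 $ l) = (\<Sum>l\<in>UNIV - {j}. Th $ j $ l * x $ l)"
    by (intro sum.cong) (auto simp: x0_def vupd_def)
  also have "Th $ j $ j * x0 $ j = - (\<Sum>l\<in>UNIV - {j}. Th $ j $ l * x $ l)"
  proof -
    have "Th $ j $ j * x0 $ j = (\<Sum>k\<in>UNIV - {j}. Th $ j $ j * (x $ k * (- Th $ k $ j / Th $ j $ j)))"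
      by (simp add: x0_def vupd_def cond_mean_def sum_distrib_left)
    also have "\<dots> = (\<Sum>k\<in>UNIV - {j}. - (Th $ j $ k * x $ k))"
    proof (rule sum.cong)
      show "Th $ j $ j * (x $ k * (- Th $ k $ j / Th $ j $ j)) = - (Th $ j $ k * x $ k)" for k
        using Th_jj_pos Th_symmetric_nth[of k j] by simp
    qed simp
    finally show ?thesis by (simp add: sum_negf)
  qed
  finally show ?thesis by (simp add: x0_def vupd_def)
qed

lemma cond_sd_square: "cond_sd * cond_sd = 1 / Th $ j $ j"
  using Th_jj_pos by (simp add: cond_sd_def)

lemma inner_self_orig_dir_eq_knock_dir: "orig_dir \<bullet> orig_dir = knock_dir j \<bullet> knock_dir j"
proof -
  have "knock_dir j \<bullet> knock_dir j
      = (cond_sd * cond_sd) * ((1 - d $ j * Th $ j $ j) * (1 - d $ j * Th $ j $ j))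
        + (2 * d $ j - d $ j * Th $ j $ j * d $ j)"
    by (simp add: knock_dir_def inner_vec_extend_vec_extend[OF inj a] inner_cov_root_rows
        mean_map_nth algebra_simps)
  also have "\<dots> = cond_sd * cond_sd"
    using Th_jj_pos by (simp add: cond_sd_square field_simps)
  finally show ?thesis
    by (simp add: orig_dir_def inner_vec_extend_vec_extend[OF inj a])
qed

lemma inner_knock_dir_orig_dir:
  assumes "k \<noteq> j"
  shows "knock_dir k \<bullet> orig_dir = knock_dir k \<bullet> knock_dir j"
proof -
  have "knock_dir k \<bullet> knock_dir j
      = (cond_sd * cond_sd) * (- (d $ k * Th $ k $ j) * (1 - d $ j * Th $ j $ j))
        - d $ k * Th $ k $ j * d $ j"
    using assms by (simp add: knock_dir_def inner_vec_extend_vec_extend[OF inj a] inner_cov_root_rows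
        mean_map_nth algebra_simps)
  also have "\<dots> = (cond_sd * cond_sd) * (- (d $ k * Th $ k $ j))"
    using Th_jj_pos by (simp add: cond_sd_square field_simps)
  finally show ?thesis
    using assms by (simp add: orig_dir_def knock_dir_def inner_vec_extend_vec_extend[OF inj a]
        mean_map_nth algebra_simps)
qed

definition "swap_reflection = householder orig_dir (knock_dir j)"

lemma sample_swap_reflection: "sample x (swap_reflection y) = swap_j j (sample x y)"
proof -
  note reflect = inner_householder[OF inner_self_orig_dir_eq_knock_dir]
  have "knock_dir k \<bullet> swap_reflection y = knock_dir k \<bullet> y" if "k \<noteq> j" for k
    unfolding swap_reflection_def using that by (intro reflect(3) inner_knock_dir_orig_dir)
  then show ?thesis
    unfolding sample_eq_inner swap_j_def swap_reflection_def
    by (simp add: reflect(1,2) knock_offset_nth_j vec_eq_iff vupd_def)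
qed

end

section \<open>Exchangeability of the knockoff kernel\<close>

lemma measurable_pair_measure_borel:
  fixes M :: "'a::topological_space measure" and K :: "'c::topological_space measure"
  assumes "sets M = sets borel" "sets K = sets borel" "f \<in> measurable (borel \<Otimes>\<^sub>M borel) N"
  shows "f \<in> measurable (M \<Otimes>\<^sub>M K) N"
proof -
  have "sets (M \<Otimes>\<^sub>M K) = sets (borel \<Otimes>\<^sub>M borel)"
    by (rule sets_pair_measure_cong) (simp_all add: assms)
  then show ?thesis
    using assms(3) measurable_cong_sets by blast
qed

lemma normal1_eq_distr_std_normal:
  assumes "v > 0"
  shows "normal1 m v = distr std_normal borel (\<lambda>e. m + sqrt v * e)"
proof -
  interpret prob_space std_normal by (rule prob_space_std_normal)
  have "distributed std_normal lborel (\<lambda>x. x) std_normal_density"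
    by (simp add: distributed_def distr_id2)
  then have "distributed std_normal lborel (\<lambda>x. m + sqrt v * x) (normal_density (m + sqrt v * 0) (\<bar>sqrt v\<bar> * 1))"
    by (rule normal_density_affine) (use assms in auto)
  then have "distr std_normal lborel (\<lambda>x. m + sqrt v * x) = density lborel (normal_density m (sqrt v))"
    using assms by (simp add: distributed_def)
  moreover have "distr std_normal borel (\<lambda>x. m + sqrt v * x) = distr std_normal lborel (\<lambda>x. m + sqrt v * x)"
    by (rule distr_cong) simp_all
  ultimately show ?thesis by (simp add: normal1_def)
qed

lemma bind_distr_eq_distr_pair_measure:
  assumes "prob_space M" "prob_space N" and F: "F \<in> measurable (M \<Otimes>\<^sub>M N) L"
  shows "M \<bind> (\<lambda>e. distr N L (\<lambda>z. F (e, z))) = distr (M \<Otimes>\<^sub>M N) L F"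
proof -
  interpret M: prob_space M by fact
  interpret N: prob_space N by fact
  have kernel: "(\<lambda>e. distr N L (\<lambda>z. F (e, z))) \<in> measurable M (subprob_algebra L)"
    using F by (intro measurable_distr2[where M=N]) (auto intro: measurable_const N.M_in_subprob)
  show ?thesis
  proof (rule measure_eqI)
    show sets: "sets (M \<bind> (\<lambda>e. distr N L (\<lambda>z. F (e, z)))) = sets (distr (M \<Otimes>\<^sub>M N) L F)"
      using M.not_empty by (subst sets_bind[where N=L]) simp_all
    fix X assume "X \<in> sets (M \<bind> (\<lambda>e. distr N L (\<lambda>z. F (e, z))))"
    then have X: "X \<in> sets L" by (simp add: sets)
    have "emeasure (M \<bind> (\<lambda>e. distr N L (\<lambda>z. F (e, z)))) X = (\<integral>\<^sup>+e. emeasure (distr N L (\<lambda>z. F (e, z))) X \<partial>M)"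
      by (rule emeasure_bind[OF M.not_empty kernel X])
    also have "\<dots> = (\<integral>\<^sup>+e. emeasure N (Pair e -` (F -` X \<inter> space (M \<Otimes>\<^sub>M N))) \<partial>M)"
    proof (rule nn_integral_cong)
      fix e assume e: "e \<in> space M"
      have "(\<lambda>z. F (e, z)) -` X \<inter> space N = Pair e -` (F -` X \<inter> space (M \<Otimes>\<^sub>M N))"
        using e by (auto simp: space_pair_measure)
      moreover have "(\<lambda>z. F (e, z)) \<in> measurable N L"
        using F e by measurable
      ultimately show "emeasure (distr N L (\<lambda>z. F (e, z))) X = emeasure N (Pair e -` (F -` X \<inter> space (M \<Otimes>\<^sub>M N)))"
        using X by (simp add: emeasure_distr)
    qed
    also have "\<dots> = emeasure (M \<Otimes>\<^sub>M N) (F -` X \<inter> space (M \<Otimes>\<^sub>M N))"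
      using measurable_sets[OF F X] by (rule N.emeasure_pair_measure_alt[symmetric])
    also have "\<dots> = emeasure (distr (M \<Otimes>\<^sub>M N) L F) X"
      by (rule emeasure_distr[OF F X, symmetric])
    finally show "emeasure (M \<bind> (\<lambda>e. distr N L (\<lambda>z. F (e, z)))) X = emeasure (distr (M \<Otimes>\<^sub>M N) L F) X" .
  qed
qed

lemma borel_measurable_swap_j: "swap_j j \<in> borel_measurable (borel :: ((real^'n) \<times> (real^'n)) measure)"
proof -
  have "(\<lambda>p. (vupd (fst p) j (snd p $ j), vupd (snd p) j (fst p $ j)))
      \<in> borel_measurable (borel \<Otimes>\<^sub>M (borel :: (real^'n) measure))"
    unfolding vupd_def by measurable
  then show ?thesis
    by (simp add: borel_prod swap_j_def case_prod_beta')
qed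

context knockoff_setting
begin

definition "completion_kernel x = distr (Q_cond Th j x) borel (vupd x j)"
definition "pair_kernel x = distr (knock_kernel Th d x) borel (Pair x)"

lemma borel_measurable_pair_sample: "pair_sample x \<in> borel_measurable (borel \<Otimes>\<^sub>M borel)"
  unfolding pair_sample_def Let_def vupd_def cond_mean_def matrix_vector_mult_def by measurable

lemma borel_measurable_sample: "sample x \<in> borel_measurable borel"
proof -
  have "(\<lambda>y. (y $ a :: real, \<chi> i. y $ \<iota> i)) \<in> measurable borel (borel \<Otimes>\<^sub>M borel)"
    by measurable
  from measurable_comp[OF this borel_measurable_pair_sample] show ?thesis
    by (simp add: sample_def[abs_def] comp_def)
qed

lemma completion_kernel_eq:
  "completion_kernel x = distr std_normal borel (\<lambda>e. vupd x j (cond_mean x + cond_sd * e))"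
proof -
  have "(\<lambda>e. cond_mean x + cond_sd * e) \<in> measurable std_normal borel"
    by (simp add: measurable_cong_sets[OF sets_std_normal refl])
  moreover have "vupd x j \<in> borel_measurable borel"
    unfolding vupd_def by measurable
  ultimately show ?thesis
    unfolding completion_kernel_def Q_cond_def cond_mean_def[symmetric] cond_sd_def
    using Th_jj_pos by (simp add: normal1_eq_distr_std_normal distr_distr comp_def)
qed

lemma measurable_completion_kernel: "completion_kernel \<in> measurable borel (subprob_algebra borel)"
proof -
  have "(\<lambda>(x, e). vupd x j (cond_mean x + cond_sd * e)) \<in> measurable (borel \<Otimes>\<^sub>M std_normal) borel"
    by (rule measurable_pair_measure_borel) (simp_all add: vupd_def cond_mean_def case_prod_beta')
  then have "(\<lambda>x. distr std_normal borel (\<lambda>e. vupd x j (cond_mean x + cond_sd * e)))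
      \<in> measurable borel (subprob_algebra borel)"
    by (intro measurable_distr2[where M=std_normal])
      (auto intro: measurable_const prob_space.M_in_subprob prob_space_std_normal)
  then show ?thesis
    by (simp add: completion_kernel_eq[abs_def])
qed

lemma pair_kernel_eq: "pair_kernel x = distr std_gauss_vec borel (\<lambda>z. (x, mean_map *v x + cov_root *v z))"
proof -
  have "(\<lambda>z. mean_map *v x + cov_root *v z) \<in> measurable (std_gauss_vec :: (real^'n) measure) borel"
    unfolding measurable_cong_sets[OF sets_std_gauss_vec refl] matrix_vector_mult_def by measurable
  moreover have "Pair x \<in> measurable (borel :: (real^'n) measure) borel"
    by measurable
  ultimately show ?thesis
    unfolding pair_kernel_def knock_kernel_def gauss_vec_def cov_root_def[symmetric] mean_map_def[symmetric]
    by (simp add: distr_distr comp_def)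
qed

lemma measurable_pair_kernel: "pair_kernel \<in> measurable borel (subprob_algebra borel)"
proof -
  have "(\<lambda>(x, z). (x, mean_map *v x + cov_root *v z)) \<in> measurable (borel \<Otimes>\<^sub>M std_gauss_vec) borel"
    by (rule measurable_pair_measure_borel) (simp_all add: matrix_vector_mult_def case_prod_beta')
  then have "(\<lambda>x. distr (std_gauss_vec :: (real^'n) measure) borel (\<lambda>z. (x, mean_map *v x + cov_root *v z)))
      \<in> measurable borel (subprob_algebra borel)"
    by (intro measurable_distr2[where M=std_gauss_vec])
      (auto intro: measurable_const prob_space.M_in_subprob prob_space_std_gauss_vec)
  then show ?thesis
    by (simp add: pair_kernel_eq[abs_def])
qed

lemma completion_kernel_bind_pair_kernel:
  "completion_kernel x \<bind> pair_kernel = distr std_gauss_vec borel (sample x)"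
proof -
  have "(\<lambda>e. vupd x j (cond_mean x + cond_sd * e)) \<in> measurable std_normal borel"
    unfolding measurable_cong_sets[OF sets_std_normal refl] vupd_def by measurable
  then have "completion_kernel x \<bind> pair_kernel
      = std_normal \<bind> (\<lambda>e. pair_kernel (vupd x j (cond_mean x + cond_sd * e)))"
    unfolding completion_kernel_eq by (rule bind_distr[OF _ measurable_pair_kernel]) simp
  also have "\<dots> = std_normal \<bind> (\<lambda>e. distr std_gauss_vec borel (\<lambda>z. pair_sample x (e, z)))"
    by (simp add: pair_kernel_eq pair_sample_def Let_def)
  also have "\<dots> = distr (std_normal \<Otimes>\<^sub>M std_gauss_vec) borel (pair_sample x)"
  proof (rule bind_distr_eq_distr_pair_measure[OF prob_space_std_normal prob_space_std_gauss_vec])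
    show "pair_sample x \<in> measurable (std_normal \<Otimes>\<^sub>M std_gauss_vec) borel"
      by (rule measurable_pair_measure_borel[OF _ _ borel_measurable_pair_sample]) simp_all
  qed
  also have "\<dots> = distr (distr std_gauss_vec borel (\<lambda>y. (y $ a, \<chi> i. y $ \<iota> i))) borel (pair_sample x)"
    by (simp add: distr_std_gauss_vec_coordinate_split[OF inj a])
  also have "\<dots> = distr std_gauss_vec borel (pair_sample x \<circ> (\<lambda>y. (y $ a, \<chi> i. y $ \<iota> i)))"
  proof (rule distr_distr)
    show "pair_sample x \<in> borel_measurable (borel :: (real \<times> (real^'n)) measure)"
      using borel_measurable_pair_sample by (simp add: borel_prod)
    show "(\<lambda>y. (y $ a, \<chi> i. y $ \<iota> i)) \<in> measurable std_gauss_vec (borel :: (real \<times> (real^'n)) measure)"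
      unfolding measurable_cong_sets[OF sets_std_gauss_vec refl] by measurable
  qed
  finally show ?thesis
    by (simp add: sample_def[abs_def] comp_def)
qed

lemma swap_invariant_given_rest:
  "distr (completion_kernel x \<bind> pair_kernel) borel (swap_j j) = completion_kernel x \<bind> pair_kernel"
proof -
  have reflection_meas: "swap_reflection \<in> borel_measurable borel"
    unfolding swap_reflection_def
    by (intro borel_measurable_linear orthogonal_transformation_linear orthogonal_transformation_householder)
  have "distr (completion_kernel x \<bind> pair_kernel) borel (swap_j j)
      = distr std_gauss_vec borel (swap_j j \<circ> sample x)"
    unfolding completion_kernel_bind_pair_kernel using borel_measurable_sample borel_measurable_swap_j
    by (subst distr_distr) (simp_all add: measurable_cong_sets[OF sets_std_gauss_vec refl])
  also have "swap_j j \<circ> sample x = sample x \<circ> swap_reflection"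
    by (simp add: fun_eq_iff sample_swap_reflection)
  also have "distr std_gauss_vec borel (sample x \<circ> swap_reflection)
      = distr (distr std_gauss_vec borel swap_reflection) borel (sample x)"
    using borel_measurable_sample reflection_meas
    by (subst distr_distr) (simp_all add: measurable_cong_sets[OF sets_std_gauss_vec refl])
  also have "\<dots> = completion_kernel x \<bind> pair_kernel"
    unfolding swap_reflection_def
    by (simp add: distr_std_gauss_vec_orthogonal_transformation orthogonal_transformation_householder
        completion_kernel_bind_pair_kernel)
  finally show ?thesis .
qed

lemma swap_invariant:
  assumes "prob_space mu" "sets mu = sets (borel :: (real^'n) measure)"
  shows "distr ((mu \<bind> completion_kernel) \<bind> pair_kernel) borel (swap_j j)
       = (mu \<bind> completion_kernel) \<bind> pair_kernel"
proof -
  have Q: "completion_kernel \<in> measurable mu (subprob_algebra borel)"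
    using measurable_completion_kernel by (simp add: measurable_cong_sets[OF assms(2) refl])
  have "distr (mu \<bind> (\<lambda>x. completion_kernel x \<bind> pair_kernel)) borel (swap_j j)
      = mu \<bind> (\<lambda>x. distr (completion_kernel x \<bind> pair_kernel) borel (swap_j j))"
    by (rule distr_bind[OF measurable_bind2[OF Q measurable_pair_kernel] prob_space.not_empty[OF assms(1)]
          borel_measurable_swap_j])
  then show ?thesis
    by (simp add: bind_assoc[OF Q measurable_pair_kernel] swap_invariant_given_rest)
qed

end

theorem lemma3:
  fixes Th :: "real^'n^'n" and d :: "real^'n"
  assumes "transpose Th = Th"
    and "\<forall>i. Th $ i $ i > 0"
    and "\<forall>i. d $ i \<ge> 0"
    and "psd (2 *\<^sub>R diagm d - diagm d ** Th ** diagm d)"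
  shows "\<forall>j. pairwise_exchangeable (knock_kernel Th d) (Q_cond Th j) j"
proof
  fix j :: 'n
  txt \<open>The noise lives on \<open>'n bit0\<close>: it has room for \<open>CARD('n) + 1\<close> coordinates and is
    well-ordered, as the orthogonal invariance of Lebesgue measure requires.\<close>
  have "card (UNIV :: 'n option set) \<le> card (UNIV :: 'n bit0 set)"
    using finite_UNIV_card_ge_0[where 'a='n] by simp
  from card_le_inj[OF finite_class.finite_UNIV finite_class.finite_UNIV this]
  obtain f :: "'n option \<Rightarrow> 'n bit0" where f: "inj f"
    by auto
  interpret knockoff_setting Th d j "f None" "f \<circ> Some"
    using assms f by unfold_locales (auto simp: inj_def)
  show "pairwise_exchangeable (knock_kernel Th d) (Q_cond Th j) j"
    using swap_invariant
    by (simp add: pairwise_exchangeable_def complete_by_def completion_kernel_def[abs_def]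
        pair_kernel_def[abs_def])
qed

end
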